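(* Let $\Phi:\mathbb{C}^2\to\mathbb{C}^3$ be the cross cap $\Phi(s,t)=(s^2,st,t)$. Then $\Omega_{\mathbb{C}}(\Phi)=[u]$.
   Context: For a holomorphic germ $\Phi:(\mathbb{C}^2,0)\to(\mathbb{C}^3,0)$ with $\operatorname{rank} d\Phi_z=2$ for $z\neq0$, the complex Smale invariant $\Omega_{\mathbb{C}}(\Phi)$ is the homotopy class of $d\Phi|_{S^3}:S^3\to V_2(\mathbb{C}^3)$ (complex Stiefel manifold of 2-frames in $\mathbb{C}^3$, via the standard trivializations of $T\mathbb{C}^2$, $T\mathbb{C}^3$), viewed in $\pi_3(V_2(\mathbb{C}^3))\cong\pi_3(U(3))\cong\pi_3(U)$ (the first isomorphism induced by the projection $U(3)\to V_2(\mathbb{C}^3)$). $u:S^3\to U(2)\subset U$ is $u_q=\begin{pmatrix}z&-\bar w\\ w&\bar z\end{pmatrix}$ for the unit quaternion $q=z+wj$, with $\mathbb{C}^2\cong\mathbb{H}$ via $(z,w)\leftrightarrow z+wj$; $[u]$ generates $\pi_3(U)$. *)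

theory Defs
  imports "HOL-Analysis.Analysis"
begin

text \<open>Complex Stiefel manifold of 2-frames in C^3 (frames = pairs of
  C-linearly independent vectors; homotopy equivalent to the orthonormal one).\<close>
definition stiefel2 :: "((complex^3) \<times> (complex^3)) set" where
  "stiefel2 = {(a, b). \<forall>\<alpha> \<beta> :: complex. \<alpha> *s a + \<beta> *s b = 0 \<longrightarrow> \<alpha> = 0 \<and> \<beta> = 0}"

definition dframe :: "(complex \<times> complex \<Rightarrow> complex^3) \<Rightarrow> complex \<times> complex \<Rightarrow> (complex^3) \<times> (complex^3)" where
  "dframe \<Phi> p = ((\<chi> i. deriv (\<lambda>x. \<Phi> (x, snd p) $ i) (fst p)),
                  (\<chi> i. deriv (\<lambda>y. \<Phi> (fst p, y) $ i) (snd p)))"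

definition crosscap :: "complex \<times> complex \<Rightarrow> complex^3" where
  "crosscap p = vector [(fst p)^2, fst p * snd p, snd p]"

text \<open>The generator: q = z + w j maps to u_q = [[z, -conj w],[w, conj z]] in U(2),
  stabilised to diag(u_q,1) in U(3) and projected to V_2(C^3) by taking the
  first two columns.\<close>
definition u_frame :: "complex \<times> complex \<Rightarrow> (complex^3) \<times> (complex^3)" where
  "u_frame p = (vector [fst p, snd p, 0], vector [- cnj (snd p), cnj (fst p), 0])"

end

theory Submission
  imports Defs
begin

text \<open>The differential of the cross cap at \<open>(s, t)\<close> has columns \<open>(2s, t, 0)\<close> and \<open>(0, s, 1)\<close>,
  while \<open>u\<close> has columns \<open>(s, t, 0)\<close> and \<open>(-t\<^sup>*, s\<^sup>*, 0)\<close>. Away from the origin the straight-line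
  homotopy between these two frames never degenerates: as long as the second column still has
  a nonzero third entry, the frame is independent because the first column is a nonzero vector
  in \<open>\<complex>\<^sup>2 \<times> 0\<close>; at the endpoint, the columns of \<open>u\<^sub>q\<close> are nonzero and orthogonal.\<close>

lemma vector3_eq_vec_lambda:
  "(vector [a, b, c] :: 'a::zero^3) = (\<chi> i. if i = 1 then a else if i = 2 then b else c)"
  by (simp add: vec_eq_iff forall_3)

lemma continuous_on_vector3 [continuous_intros]:
  assumes "continuous_on S f" "continuous_on S g" "continuous_on S h"
  shows "continuous_on S (\<lambda>x. (vector [f x, g x, h x] :: 'a::{zero,topological_space}^3))"
  unfolding vector3_eq_vec_lambda
proof (rule continuous_on_vec_lambda)
  fix i :: 3
  show "continuous_on S (\<lambda>x. if i = 1 then f x else if i = 2 then g x else h x)"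
    by (cases "i = 1"; cases "i = 2") (simp_all add: assms)
qed

lemma dframe_crosscap:
  "dframe crosscap p = (vector [2 * fst p, snd p, 0], vector [0, fst p, 1])"
proof -
  have "deriv (\<lambda>x. x\<^sup>2) z = 2 * z" for z :: complex
    by (rule DERIV_imp_deriv) (auto intro!: derivative_eq_intros)
  then show ?thesis
    by (simp add: dframe_def crosscap_def vec_eq_iff forall_3)
qed

lemma in_stiefel2_if_third_entries:
  assumes "a $ 3 = 0" "b $ 3 \<noteq> 0" "a \<noteq> 0"
  shows "(a, b) \<in> stiefel2"
  unfolding stiefel2_def
proof (clarify)
  fix \<alpha> \<beta> :: complex
  assume dep: "\<alpha> *s a + \<beta> *s b = 0"
  then have "(\<alpha> *s a + \<beta> *s b) $ 3 = 0"
    by simp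
  then have "\<beta> * b $ 3 = 0"
    using assms(1) by simp
  then have "\<beta> = 0"
    using assms(2) by simp
  with dep assms(3) show "\<alpha> = 0 \<and> \<beta> = 0"
    by simp
qed

lemma u_frame_in_stiefel2:
  assumes "(s, t) \<noteq> 0"
  shows "u_frame (s, t) \<in> stiefel2"
proof -
  have "\<alpha> = 0 \<and> \<beta> = 0"
    if "\<alpha> *s vector [s, t, 0] + \<beta> *s vector [- cnj t, cnj s, 0] = (0 :: complex^3)" for \<alpha> \<beta>
  proof -
    from that have eq1: "\<alpha> * s - \<beta> * cnj t = 0" and eq2: "\<alpha> * t + \<beta> * cnj s = 0"
      by (auto simp: vec_eq_iff forall_3)
    have "s * cnj s + t * cnj t = complex_of_real ((norm (s, t))\<^sup>2)"
      by (simp add: norm_Pair flip: complex_norm_square)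
    then have norm_sq: "s * cnj s + t * cnj t \<noteq> 0"
      using assms by simp
    have "\<alpha> * (s * cnj s + t * cnj t) = cnj s * (\<alpha> * s - \<beta> * cnj t) + cnj t * (\<alpha> * t + \<beta> * cnj s)"
      by (simp add: algebra_simps)
    then have "\<alpha> = 0"
      using eq1 eq2 norm_sq by simp
    moreover have "\<beta> = 0"
      using eq1 eq2 \<open>\<alpha> = 0\<close> assms by (auto simp: zero_prod_def)
    ultimately show "\<alpha> = 0 \<and> \<beta> = 0" ..
  qed
  then show ?thesis
    by (simp add: stiefel2_def u_frame_def)
qed

lemma closed_segment_dframe_crosscap_u_frame_subset_stiefel2:
  assumes "(s, t) \<noteq> 0"
  shows "closed_segment (dframe crosscap (s, t)) (u_frame (s, t)) \<subseteq> stiefel2"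
proof
  fix F
  assume "F \<in> closed_segment (dframe crosscap (s, t)) (u_frame (s, t))"
  then obtain u where u: "0 \<le> u" "u \<le> 1"
    and F: "F = (1 - u) *\<^sub>R dframe crosscap (s, t) + u *\<^sub>R u_frame (s, t)"
    unfolding closed_segment_def by blast
  show "F \<in> stiefel2"
  proof (cases "u = 1")
    case True
    then show ?thesis
      using F u_frame_in_stiefel2 assms by simp
  next
    case False
    have entries: "fst F $ 1 = (2 - u) * s" "fst F $ 2 = t" "fst F $ 3 = 0" "snd F $ 3 = 1 - u"
      by (simp_all add: F dframe_crosscap u_frame_def)
         (simp_all add: scaleR_conv_of_real algebra_simps)
    have "complex_of_real (2 - u) \<noteq> 0"
      using u by (simp only: of_real_eq_0_iff)
    then have "(2 - u) * s \<noteq> 0 \<or> t \<noteq> 0"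
      using assms by (auto simp: zero_prod_def)
    with entries False have "fst F $ 3 = 0" "snd F $ 3 \<noteq> 0" "fst F \<noteq> 0"
      by auto
    then show ?thesis
      using in_stiefel2_if_third_entries[of "fst F" "snd F"] by simp
  qed
qed

theorem proposition4p6:
  shows "homotopic_with_canon (\<lambda>_. True) (sphere (0 :: complex \<times> complex) 1) stiefel2
           (dframe crosscap) u_frame"
proof (rule homotopic_with_linear)
  show "continuous_on (sphere 0 1) (dframe crosscap)"
    unfolding dframe_crosscap by (intro continuous_intros)
  show "continuous_on (sphere 0 1) u_frame"
    unfolding u_frame_def by (intro continuous_intros)
  show "closed_segment (dframe crosscap p) (u_frame p) \<subseteq> stiefel2"
    if "p \<in> sphere 0 1" for p
  proof (cases p)
    case (Pair s t)
    show ?thesis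
      using that unfolding Pair
      by (intro closed_segment_dframe_crosscap_u_frame_subset_stiefel2) auto
  qed
qed

end
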